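(* Let $K$ be a field, $T$ a subgroup of $K^\times$, and $w$ a valuation on the factor hyperfield $K_T$. Then there exists a valuation $v$ on the field $K$ such that $T\subseteq\mathcal{O}_v^\times$ and $w=v_T$, where $v_T(xT):=vx$.
   Context: A hyperfield is $(F,+,\cdot,0,1)$ with $+$ a multivalued operation making $(F,+,0)$ a canonical hypergroup (associative, commutative, unique inverses $-x$ with $0\in x+(-x)$, and $z\in x+y\Rightarrow y\in z+(-x)$), $(F,\cdot)$ commutative with $0$ absorbing, $x(y+z)=xy+xz$, and $F\setminus\{0\}$ an abelian group with neutral $1\neq 0$. Valuation: for an ordered abelian group $\Gamma$ and $\infty>\Gamma$ with $\gamma+\infty=\infty+\gamma=\infty$, a valuation on a hyperfield $F$ is a surjective map $v:F\to\Gamma\cup\{\infty\}$ with $vx=\infty\iff x=0$, $v(xy)=vx+vy$, and $z\in x+y\Rightarrow vz\ge\min\{vx,vy\}$. A field is regarded as a hyperfield with singleton sums, so this includes classical (Krull) valuations. $\mathcal{O}_v^\times:=\{x: vx=0\}$. Factor hyperfield: for a field $K$ and a subgroup $T\le K^\times$, $K_T$ is the set of cosets $xT$ ($x\in K$, $0T=\{0\}$) with $xT+yT:=\{(x+yt)T:t\in T\}$ and $xT\cdot yT:=xyT$. *)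

theory Defs
  imports Main
begin

text \<open>Value set \<Gamma> \<union> {\<infinity>} is modelled by 'g option, None = \<infinity>.\<close>

fun ext_add :: "'g::linordered_ab_group_add option \<Rightarrow> 'g option \<Rightarrow> 'g option" where
  "ext_add (Some a) (Some b) = Some (a + b)"
| "ext_add _ _ = None"

definition ext_le :: "'g::linordered_ab_group_add option \<Rightarrow> 'g option \<Rightarrow> bool" where
  "ext_le a b \<longleftrightarrow> b = None \<or> (a \<noteq> None \<and> the a \<le> the b)"

definition ext_min :: "'g::linordered_ab_group_add option \<Rightarrow> 'g option \<Rightarrow> 'g option" where
  "ext_min a b = (if ext_le a b then a else b)"

definition hvaluation ::
  "'b set \<Rightarrow> 'b \<Rightarrow> ('b \<Rightarrow> 'b \<Rightarrow> 'b set) \<Rightarrow> ('b \<Rightarrow> 'b \<Rightarrow> 'b)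
    \<Rightarrow> ('b \<Rightarrow> 'g::linordered_ab_group_add option) \<Rightarrow> bool" where
  "hvaluation F z hadd hmul v \<longleftrightarrow>
     v ` F = UNIV \<and>
     (\<forall>x\<in>F. v x = None \<longleftrightarrow> x = z) \<and>
     (\<forall>x\<in>F. \<forall>y\<in>F. v (hmul x y) = ext_add (v x) (v y)) \<and>
     (\<forall>x\<in>F. \<forall>y\<in>F. \<forall>u\<in>hadd x y. ext_le (ext_min (v x) (v y)) (v u))"

definition field_valuation :: "('a::field \<Rightarrow> 'g::linordered_ab_group_add option) \<Rightarrow> bool" where
  "field_valuation v \<longleftrightarrow> hvaluation UNIV 0 (\<lambda>x y. {x + y}) (*) v"

definition mult_subgroup :: "'a::field set \<Rightarrow> bool" where
  "mult_subgroup T \<longleftrightarrow> T \<subseteq> - {0} \<and> 1 \<in> T \<and>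
     (\<forall>s\<in>T. \<forall>t\<in>T. s * t \<in> T) \<and> (\<forall>t\<in>T. inverse t \<in> T)"

definition coset :: "'a::field \<Rightarrow> 'a set \<Rightarrow> 'a set" where
  "coset x T = (\<lambda>t. x * t) ` T"

definition fh_carrier :: "'a::field set \<Rightarrow> 'a set set" where
  "fh_carrier T = range (\<lambda>x. coset x T)"

definition fh_add :: "'a::field set \<Rightarrow> 'a set \<Rightarrow> 'a set \<Rightarrow> 'a set set" where
  "fh_add T X Y = {coset (x + y * t) T | x y t. X = coset x T \<and> Y = coset y T \<and> t \<in> T}"

definition fh_mul :: "'a::field set \<Rightarrow> 'a set \<Rightarrow> 'a set \<Rightarrow> 'a set" where
  "fh_mul T X Y = coset ((SOME x. X = coset x T) * (SOME y. Y = coset y T)) T"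

definition factor_valuation :: "'a::field set \<Rightarrow> ('a set \<Rightarrow> 'g::linordered_ab_group_add option) \<Rightarrow> bool" where
  "factor_valuation T w \<longleftrightarrow> hvaluation (fh_carrier T) {0} (fh_add T) (fh_mul T) w"

end

theory Submission
  imports Defs
begin

text \<open>The valuation on \<open>K\<close> is simply \<open>v x := w (x T)\<close>. Multiplicativity and surjectivity
  transfer directly since \<open>xT \<cdot> yT = xyT\<close> and every element of \<open>K\<^sub>T\<close> is a coset; the
  ultrametric inequality transfers because \<open>(x + y)T \<in> xT + yT\<close> (take \<open>t = 1\<close>). Finally
  \<open>v t = v 1 = 0\<close> for \<open>t \<in> T\<close>, as \<open>tT = T\<close>.\<close>

lemma mem_coset_self:
  assumes "mult_subgroup T"
  shows "x \<in> coset x T"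
  using assms unfolding coset_def mult_subgroup_def by force

lemma coset_mult_right:
  assumes T: "mult_subgroup T" and t: "t \<in> T"
  shows "coset (x * t) T = coset x T"
proof
  show "coset (x * t) T \<subseteq> coset x T"
    using T t unfolding coset_def mult_subgroup_def by (auto simp: mult.assoc)
next
  show "coset x T \<subseteq> coset (x * t) T"
  proof
    fix z assume "z \<in> coset x T"
    then obtain s where s: "s \<in> T" "z = x * s" unfolding coset_def by auto
    have "inverse t * s \<in> T" "t \<noteq> 0"
      using T t s unfolding mult_subgroup_def by auto
    moreover from \<open>t \<noteq> 0\<close> have "z = x * t * (inverse t * s)"
      using s by (simp add: field_simps)
    ultimately show "z \<in> coset (x * t) T" unfolding coset_def by auto
  qed
qed

lemma coset_eqE:
  assumes "mult_subgroup T" and "coset x' T = coset x T"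
  obtains t where "t \<in> T" and "x' = x * t"
  using mem_coset_self[OF assms(1), of x'] assms(2) unfolding coset_def by auto

lemma coset_eq_zero_iff:
  assumes T: "mult_subgroup T"
  shows "coset x T = {0} \<longleftrightarrow> x = 0"
proof
  assume "coset x T = {0}"
  then show "x = 0" using mem_coset_self[OF T, of x] by auto
next
  assume "x = 0"
  moreover have "T \<noteq> {}" using T unfolding mult_subgroup_def by auto
  ultimately show "coset x T = {0}" unfolding coset_def by auto
qed

lemma fh_mul_coset:
  assumes T: "mult_subgroup T"
  shows "fh_mul T (coset x T) (coset y T) = coset (x * y) T"
proof -
  define x' where "x' = (SOME x'. coset x T = coset x' T)"
  define y' where "y' = (SOME y'. coset y T = coset y' T)"
  have "coset x T = coset x' T" unfolding x'_def by (rule someI[of _ x]) simp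
  then obtain t where t: "t \<in> T" "x' = x * t" using coset_eqE[OF T] by metis
  have "coset y T = coset y' T" unfolding y'_def by (rule someI[of _ y]) simp
  then obtain s where s: "s \<in> T" "y' = y * s" using coset_eqE[OF T] by metis
  have ts: "t * s \<in> T" using T t s unfolding mult_subgroup_def by auto
  have "fh_mul T (coset x T) (coset y T) = coset (x' * y') T"
    unfolding fh_mul_def x'_def y'_def by simp
  also have "x' * y' = (x * y) * (t * s)" using t s by (simp add: ac_simps)
  also have "coset \<dots> T = coset (x * y) T" by (rule coset_mult_right[OF T ts])
  finally show ?thesis .
qed

lemma coset_add_mem_fh_add:
  assumes "mult_subgroup T"
  shows "coset (x + y) T \<in> fh_add T (coset x T) (coset y T)"
proof -
  have "1 \<in> T" using assms unfolding mult_subgroup_def by auto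
  then show ?thesis unfolding fh_add_def by force
qed

lemma field_valuation_one:
  assumes "field_valuation v"
  shows "v 1 = Some 0"
proof -
  have mul: "v (1 * 1) = ext_add (v 1) (v 1)" and nonzero: "v 1 \<noteq> None"
    using assms unfolding field_valuation_def hvaluation_def by (blast, simp)
  from nonzero obtain a where a: "v 1 = Some a" by blast
  with mul have "a = a + a" by simp
  with a show ?thesis by simp
qed

lemma field_valuation_of_factor_valuation:
  assumes T: "mult_subgroup T" and w: "factor_valuation T w"
  shows "field_valuation (\<lambda>x. w (coset x T))"
proof -
  have car: "coset x T \<in> fh_carrier T" for x unfolding fh_carrier_def by auto
  have surj: "w ` fh_carrier T = UNIV"
    and zero: "\<forall>X\<in>fh_carrier T. w X = None \<longleftrightarrow> X = {0}"
    and mul: "\<forall>X\<in>fh_carrier T. \<forall>Y\<in>fh_carrier T. w (fh_mul T X Y) = ext_add (w X) (w Y)"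
    and add: "\<forall>X\<in>fh_carrier T. \<forall>Y\<in>fh_carrier T. \<forall>U\<in>fh_add T X Y.
                ext_le (ext_min (w X) (w Y)) (w U)"
    using w unfolding factor_valuation_def hvaluation_def by auto
  have "range (\<lambda>x. w (coset x T)) = UNIV"
    using surj unfolding fh_carrier_def by (simp add: image_image)
  moreover have "w (coset x T) = None \<longleftrightarrow> x = 0" for x
    using zero car coset_eq_zero_iff[OF T] by auto
  moreover have "w (coset (x * y) T) = ext_add (w (coset x T)) (w (coset y T))" for x y
    using mul car fh_mul_coset[OF T] by metis
  moreover have "ext_le (ext_min (w (coset x T)) (w (coset y T))) (w (coset (x + y) T))" for x y
    using add car coset_add_mem_fh_add[OF T] by blast
  ultimately show ?thesis unfolding field_valuation_def hvaluation_def by auto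
qed

theorem lemma3p6:
  fixes T :: "'a::field set" and w :: "'a set \<Rightarrow> 'g::linordered_ab_group_add option"
  assumes "mult_subgroup T"
    and "factor_valuation T w"
  shows "\<exists>v :: 'a \<Rightarrow> 'g option. field_valuation v \<and> (\<forall>t\<in>T. v t = Some 0)
           \<and> (\<forall>x. w (coset x T) = v x)"
proof (intro exI conjI)
  let ?v = "\<lambda>x. w (coset x T)"
  show v: "field_valuation ?v"
    using field_valuation_of_factor_valuation[OF assms] .
  show "\<forall>t\<in>T. ?v t = Some 0"
  proof
    fix t assume "t \<in> T"
    then have "coset t T = coset 1 T"
      using coset_mult_right[OF assms(1), of t 1] by simp
    then show "?v t = Some 0" using field_valuation_one[OF v] by simp
  qed
qed simp

end
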